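(* Let $n\geq 4$ and $\alpha_2,\dots,\alpha_n\in\mathbb{C}$ with $\alpha_2=\alpha_3=0$ and $\alpha_4\neq0$. Then the transposed Poisson algebra $\mathbf{TP}(\alpha_2,\dots,\alpha_n)$ is isomorphic to $\mathbf{TP}(0,0,1,\alpha,0,\dots,0)$ for some $\alpha\in\mathbb{C}$, i.e. to the algebra with parameters $\alpha_4'=1$, $\alpha_5'=\alpha$ (present only when $n\geq5$), and all other $\alpha_i'=0$.
   Context: $\mu_0^n$ is the complex commutative associative algebra with basis $\{e_1,\dots,e_n\}$ and $e_i\cdot e_j=e_{i+j}$ for $2\leq i+j\leq n$, other products zero. For $\alpha_2,\dots,\alpha_n\in\mathbb{C}$, $\mathbf{TP}(\alpha_2,\dots,\alpha_n)$ denotes $\mu_0^n$ with its associative product together with the bracket $[e_i,e_j]=(j-i)\sum_{t=i+j-1}^{n}\alpha_{t-i-j+3}e_t$ for $3\leq i+j\leq n+1$, other brackets of basis elements zero. Isomorphisms preserve both operations. *)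

theory Defs
  imports Complex_Main
begin

text \<open>Elements of the n-dimensional algebra: coordinate functions x :: nat => complex,
  x t = coefficient of e_t, supported on {1..n}.\<close>

definition vspace :: "nat \<Rightarrow> (nat \<Rightarrow> complex) set" where
  "vspace n = {x. \<forall>t. t \<notin> {1..n} \<longrightarrow> x t = 0}"

text \<open>Associative product of mu_0^n: e_i e_j = e_(i+j) if i+j <= n, else 0.\<close>
definition mu_prod :: "nat \<Rightarrow> (nat \<Rightarrow> complex) \<Rightarrow> (nat \<Rightarrow> complex) \<Rightarrow> (nat \<Rightarrow> complex)" where
  "mu_prod n x y = (\<lambda>t. if t \<in> {1..n} then
      (\<Sum>i\<in>{1..n}. \<Sum>j\<in>{1..n}. if i + j = t then x i * y j else 0) else 0)"

text \<open>Structure constant: coefficient of e_t in [e_i,e_j].\<close>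
definition tp_const :: "nat \<Rightarrow> (nat \<Rightarrow> complex) \<Rightarrow> nat \<Rightarrow> nat \<Rightarrow> nat \<Rightarrow> complex" where
  "tp_const n \<alpha> i j t =
     (if 3 \<le> i + j \<and> i + j \<le> n + 1 \<and> i + j - 1 \<le> t \<and> t \<le> n
      then of_int (int j - int i) * \<alpha> (t + 3 - i - j) else 0)"

definition tp_bracket :: "nat \<Rightarrow> (nat \<Rightarrow> complex) \<Rightarrow> (nat \<Rightarrow> complex) \<Rightarrow> (nat \<Rightarrow> complex) \<Rightarrow> (nat \<Rightarrow> complex)" where
  "tp_bracket n \<alpha> x y = (\<lambda>t. if t \<in> {1..n} then
      (\<Sum>i\<in>{1..n}. \<Sum>j\<in>{1..n}. x i * y j * tp_const n \<alpha> i j t) else 0)"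

definition tp_isomorphic :: "nat \<Rightarrow> (nat \<Rightarrow> complex) \<Rightarrow> (nat \<Rightarrow> complex) \<Rightarrow> bool" where
  "tp_isomorphic n \<alpha> \<beta> \<longleftrightarrow>
     (\<exists>f. bij_betw f (vspace n) (vspace n)
        \<and> (\<forall>x\<in>vspace n. \<forall>y\<in>vspace n. f (\<lambda>t. x t + y t) = (\<lambda>t. f x t + f y t))
        \<and> (\<forall>c. \<forall>x\<in>vspace n. f (\<lambda>t. c * x t) = (\<lambda>t. c * f x t))
        \<and> (\<forall>x\<in>vspace n. \<forall>y\<in>vspace n. f (mu_prod n x y) = mu_prod n (f x) (f y))
        \<and> (\<forall>x\<in>vspace n. \<forall>y\<in>vspace n. f (tp_bracket n \<alpha> x y) = tp_bracket n \<beta> (f x) (f y)))"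

end

theory Submission
  imports Defs "HOL-Computational_Algebra.Formal_Power_Series"
begin

(* Identify x \<in> vspace n with the power series \<Sum>\<^sub>t x\<^sub>t z\<^sup>t, read modulo z\<^sup>n\<^sup>+\<^sup>1. The product of
  \<mu>\<^sub>0\<^sup>n is then multiplication of series and, because \<alpha>\<^sub>2 = \<alpha>\<^sub>3 = 0, the bracket is
  [x, y] = (x \<cdot> z y' - y \<cdot> z x') G\<^sub>\<alpha> with G\<^sub>\<alpha> = \<Sum>\<^sub>k \<alpha>\<^sub>k\<^sub>+\<^sub>3 z\<^sup>k.
  A substitution z \<mapsto> \<phi>(z) with \<phi>(0) = 0 and \<phi>'(0) \<noteq> 0 is an automorphism of \<mu>\<^sub>0\<^sup>n, and it carries
  the bracket of \<alpha> to that of \<beta> as soon as \<phi> \<cdot> (G\<^sub>\<alpha> \<circ> \<phi>) = z \<phi>' G\<^sub>\<beta> modulo z\<^sup>n\<^sup>+\<^sup>1.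
  Scaling z \<mapsto> c z normalises \<alpha>\<^sub>4 to 1. Then, for N = 3, 4, \<dots>, the substitution
  z \<mapsto> z + \<delta> z\<^sup>N with \<delta> = [z\<^sup>N] G / (N - 2) removes the coefficient of z\<^sup>N from G and keeps
  the lower ones. Only the coefficient of z\<^sup>2, that is \<alpha>\<^sub>5, survives, because there N - 2 = 0. *)

unbundle fps_syntax

section \<open>Power series modulo a power of z\<close>

definition fps_eq_upto :: "nat \<Rightarrow> 'a fps \<Rightarrow> 'a fps \<Rightarrow> bool" where
  "fps_eq_upto m A B \<longleftrightarrow> (\<forall>k\<le>m. A $ k = B $ k)"

lemma fps_eq_upto_refl [simp]: "fps_eq_upto m A A"
  by (simp add: fps_eq_upto_def)

lemma fps_eq_upto_sym: "fps_eq_upto m A B \<Longrightarrow> fps_eq_upto m B A"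
  by (simp add: fps_eq_upto_def)

lemma fps_eq_upto_trans [trans]:
  "fps_eq_upto m A B \<Longrightarrow> fps_eq_upto m B C \<Longrightarrow> fps_eq_upto m A C"
  by (simp add: fps_eq_upto_def)

lemma fps_eq_upto_add:
  "fps_eq_upto m A B \<Longrightarrow> fps_eq_upto m C D \<Longrightarrow> fps_eq_upto m (A + C) (B + D)"
  by (simp add: fps_eq_upto_def)

lemma fps_eq_upto_diff:
  fixes A :: "'a::ab_group_add fps"
  shows "fps_eq_upto m A B \<Longrightarrow> fps_eq_upto m C D \<Longrightarrow> fps_eq_upto m (A - C) (B - D)"
  by (simp add: fps_eq_upto_def)

lemma fps_eq_upto_mult:
  fixes A :: "'a::semiring_0 fps"
  shows "fps_eq_upto m A B \<Longrightarrow> fps_eq_upto m C D \<Longrightarrow> fps_eq_upto m (A * C) (B * D)"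
  unfolding fps_eq_upto_def fps_mult_nth by (auto intro!: sum.cong)

lemma fps_eq_upto_power:
  fixes A :: "'a::semiring_1 fps"
  shows "fps_eq_upto m A B \<Longrightarrow> fps_eq_upto m (A ^ i) (B ^ i)"
  by (induction i) (simp_all add: fps_eq_upto_mult)

lemma fps_eq_upto_X_power_mult:
  fixes A :: "'a::comm_semiring_1 fps"
  shows "fps_eq_upto m A B \<Longrightarrow> fps_eq_upto (m + j) (fps_X ^ j * A) (fps_X ^ j * B)"
  unfolding fps_eq_upto_def fps_X_power_mult_nth by auto

lemma fps_eq_upto_X_deriv:
  fixes A :: "'a::comm_ring_1 fps"
  shows "fps_eq_upto m A B \<Longrightarrow> fps_eq_upto m (fps_X * fps_deriv A) (fps_X * fps_deriv B)"
  unfolding fps_eq_upto_def by (auto simp: fps_mult_fps_X_deriv_shift)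

lemma fps_eq_upto_compose_left:
  fixes A :: "'a::semiring_1 fps"
  shows "fps_eq_upto m A B \<Longrightarrow> fps_eq_upto m (A oo C) (B oo C)"
  unfolding fps_eq_upto_def fps_compose_nth by (auto intro!: sum.cong)

lemma fps_eq_upto_compose_right:
  fixes A :: "'a::semiring_1 fps"
  assumes "fps_eq_upto m A B"
  shows "fps_eq_upto m (C oo A) (C oo B)"
  using fps_eq_upto_power[OF assms]
  unfolding fps_eq_upto_def fps_compose_nth by (auto intro!: sum.cong)

lemma fps_eq_upto_inverse_one_plus:
  fixes A :: "'a::field fps"
  assumes "fps_eq_upto m (A * A) 0"
  shows "fps_eq_upto m (inverse (1 + A)) (1 - A)"
proof -
  have "A $ 0 = 0"
    using assms[unfolded fps_eq_upto_def, rule_format, of 0] by simp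
  then have unit: "(1 + A) $ 0 \<noteq> 0"
    by simp
  have "fps_eq_upto m (1 - A * A) (1 - 0)"
    by (rule fps_eq_upto_diff[OF fps_eq_upto_refl assms])
  then have "fps_eq_upto m ((1 + A) * (1 - A)) 1"
    by (simp add: algebra_simps)
  then have "fps_eq_upto m (inverse (1 + A) * ((1 + A) * (1 - A))) (inverse (1 + A) * 1)"
    by (rule fps_eq_upto_mult[OF fps_eq_upto_refl])
  then show ?thesis
    using unit by (simp add: mult.assoc[symmetric] inverse_mult_eq_1 fps_eq_upto_sym)
qed

section \<open>The algebra as truncated power series\<close>

definition vec_of_fps :: "nat \<Rightarrow> complex fps \<Rightarrow> nat \<Rightarrow> complex" where
  "vec_of_fps n F = (\<lambda>t. if t \<in> {1..n} then F $ t else 0)"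

definition tp_series :: "(nat \<Rightarrow> complex) \<Rightarrow> complex fps" where
  "tp_series \<alpha> = Abs_fps (\<lambda>k. \<alpha> (k + 3))"

lemma vspace_zero: "x \<in> vspace n \<Longrightarrow> x 0 = 0"
  by (simp add: vspace_def)

lemma vec_of_fps_in_vspace: "vec_of_fps n F \<in> vspace n"
  by (simp add: vspace_def vec_of_fps_def)

lemma vec_of_fps_cong: "fps_eq_upto n F G \<Longrightarrow> vec_of_fps n F = vec_of_fps n G"
  by (auto simp: vec_of_fps_def fps_eq_upto_def fun_eq_iff)

lemma vec_of_fps_Abs_fps: "x \<in> vspace n \<Longrightarrow> vec_of_fps n (Abs_fps x) = x"
  by (auto simp: vec_of_fps_def vspace_def fun_eq_iff)

lemma fps_eq_upto_Abs_fps_vec_of_fps: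
  "F $ 0 = 0 \<Longrightarrow> fps_eq_upto n (Abs_fps (vec_of_fps n F)) F"
  by (auto simp: vec_of_fps_def fps_eq_upto_def Suc_le_eq)

lemma sum_vspace_restrict:
  fixes h :: "nat \<Rightarrow> nat \<Rightarrow> complex"
  assumes x: "x \<in> vspace n" and y: "y \<in> vspace n" and t: "t \<le> n"
    and h: "\<And>i j. t < i + j \<Longrightarrow> h i j = 0"
  shows "(\<Sum>i\<in>{1..n}. \<Sum>j\<in>{1..n}. x i * y j * h i j)
       = (\<Sum>i\<in>{0..t}. \<Sum>j\<in>{0..t}. x i * y j * h i j)"
proof -
  have x0: "x 0 = 0" and y0: "y 0 = 0"
    using x y by (auto simp: vspace_zero)
  have inner: "(\<Sum>j\<in>{1..n}. x i * y j * h i j) = (\<Sum>j\<in>{0..n}. x i * y j * h i j)" for i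
    by (rule sum.mono_neutral_left) (auto simp: y0 Suc_le_eq)
  have inner_restrict:
    "(\<Sum>j\<in>{0..t}. x i * y j * h i j) = (\<Sum>j\<in>{0..n}. x i * y j * h i j)" if "i \<le> t" for i
    by (rule sum.mono_neutral_left) (use t h in auto)
  have "(\<Sum>i\<in>{1..n}. \<Sum>j\<in>{1..n}. x i * y j * h i j)
      = (\<Sum>i\<in>{0..n}. \<Sum>j\<in>{0..n}. x i * y j * h i j)"
    unfolding inner by (rule sum.mono_neutral_left) (auto simp: x0 Suc_le_eq)
  also have "\<dots> = (\<Sum>i\<in>{0..t}. \<Sum>j\<in>{0..n}. x i * y j * h i j)"
    by (rule sum.mono_neutral_right) (use t h in \<open>auto intro!: sum.neutral\<close>)
  also have "\<dots> = (\<Sum>i\<in>{0..t}. \<Sum>j\<in>{0..t}. x i * y j * h i j)"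
    by (rule sum.cong) (auto simp: inner_restrict)
  finally show ?thesis .
qed

lemma sum_square_triangle:
  fixes g :: "nat \<Rightarrow> nat \<Rightarrow> 'a::comm_monoid_add"
  shows "(\<Sum>i\<in>{0..t}. \<Sum>j\<in>{0..t}. if i + j \<le> t then g i j else 0)
       = (\<Sum>k\<in>{0..t}. \<Sum>i\<in>{0..k}. g i (k - i))"
proof -
  have "(\<Sum>i\<in>{0..t}. \<Sum>j\<in>{0..t}. if i + j \<le> t then g i j else 0)
      = (\<Sum>(i, j)\<in>{0..t} \<times> {0..t}. if i + j \<le> t then g i j else 0)"
    by (simp add: sum.cartesian_product)
  also have "\<dots> = (\<Sum>(i, j)\<in>{(i, j). i + j \<le> t}. g i j)"
    by (rule sum.mono_neutral_cong_right) (auto split: if_splits)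
  also have "\<dots> = (\<Sum>k\<le>t. \<Sum>i\<le>k. g i (k - i))"
    by (rule sum.triangle_reindex_eq)
  finally show ?thesis
    by (simp add: atLeast0AtMost)
qed

lemma fps_mult3_nth:
  fixes A :: "'a::comm_semiring_1 fps"
  shows "(A * B * C) $ t = (\<Sum>i\<in>{0..t}. \<Sum>j\<in>{0..t}.
     if i + j \<le> t then A $ i * B $ j * C $ (t - i - j) else 0)"
  unfolding sum_square_triangle fps_mult_nth
  by (auto intro!: sum.cong simp: sum_distrib_right)

lemma mu_prod_eq_vec_of_fps:
  assumes x: "x \<in> vspace n" and y: "y \<in> vspace n"
  shows "mu_prod n x y = vec_of_fps n (Abs_fps x * Abs_fps y)"
proof
  fix t
  show "mu_prod n x y t = vec_of_fps n (Abs_fps x * Abs_fps y) t"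
  proof (cases "t \<in> {1..n}")
    case True
    have "mu_prod n x y t = (\<Sum>i\<in>{1..n}. \<Sum>j\<in>{1..n}. x i * y j * (if i + j = t then 1 else 0))"
      using True by (simp add: mu_prod_def if_distrib cong: if_cong)
    also have "\<dots> = (\<Sum>i\<in>{0..t}. \<Sum>j\<in>{0..t}. x i * y j * (if i + j = t then 1 else 0))"
      by (rule sum_vspace_restrict[OF x y]) (use True in auto)
    also have "\<dots> = (Abs_fps x * Abs_fps y * 1) $ t"
      unfolding fps_mult3_nth by (auto intro!: sum.cong)
    finally show ?thesis
      using True by (simp add: vec_of_fps_def)
  next
    case False
    then show ?thesis
      unfolding mu_prod_def vec_of_fps_def by auto
  qed
qed

lemma tp_const_eq:
  assumes "1 \<le> i" "1 \<le> j" "t \<le> n" "\<alpha> 2 = 0" "\<alpha> 3 = 0"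
  shows "tp_const n \<alpha> i j t
           = (if i + j \<le> t then (of_nat j - of_nat i) * \<alpha> (t - i - j + 3) else 0)"
proof (cases "i + j \<le> t")
  case True
  then show ?thesis
    using assms by (cases "i + j = 2") (auto simp: tp_const_def of_nat_diff)
next
  case False
  then show ?thesis
    using assms by (cases "i + j = t + 1") (auto simp: tp_const_def)
qed

lemma tp_bracket_eq_vec_of_fps:
  assumes x: "x \<in> vspace n" and y: "y \<in> vspace n" and \<alpha>: "\<alpha> 2 = 0" "\<alpha> 3 = 0"
  shows "tp_bracket n \<alpha> x y = vec_of_fps n ((Abs_fps x * (fps_X * fps_deriv (Abs_fps y))
            - Abs_fps y * (fps_X * fps_deriv (Abs_fps x))) * tp_series \<alpha>)"
proof
  fix t
  show "tp_bracket n \<alpha> x y t = vec_of_fps n ((Abs_fps x * (fps_X * fps_deriv (Abs_fps y))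
            - Abs_fps y * (fps_X * fps_deriv (Abs_fps x))) * tp_series \<alpha>) t"
  proof (cases "t \<in> {1..n}")
    case True
    define h where
      "h i j = (if i + j \<le> t then (of_nat j - of_nat i) * \<alpha> (t - i - j + 3) else 0)" for i j
    have "tp_bracket n \<alpha> x y t = (\<Sum>i\<in>{1..n}. \<Sum>j\<in>{1..n}. x i * y j * h i j)"
      using True unfolding tp_bracket_def h_def by (auto intro!: sum.cong simp: tp_const_eq \<alpha>)
    also have "\<dots> = (\<Sum>i\<in>{0..t}. \<Sum>j\<in>{0..t}. x i * y j * h i j)"
      by (rule sum_vspace_restrict[OF x y]) (use True in \<open>auto simp: h_def\<close>)
    also have "\<dots> = (\<Sum>i\<in>{0..t}. \<Sum>j\<in>{0..t}.
           if i + j \<le> t then x i * (of_nat j * y j) * \<alpha> (t - i - j + 3) else 0)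
       - (\<Sum>i\<in>{0..t}. \<Sum>j\<in>{0..t}.
           if j + i \<le> t then y j * (of_nat i * x i) * \<alpha> (t - j - i + 3) else 0)"
      unfolding sum_subtractf[symmetric] h_def
      by (intro sum.cong refl) (auto simp: algebra_simps add.commute)
    also have "\<dots> = (\<Sum>i\<in>{0..t}. \<Sum>j\<in>{0..t}.
           if i + j \<le> t then x i * (of_nat j * y j) * \<alpha> (t - i - j + 3) else 0)
       - (\<Sum>i\<in>{0..t}. \<Sum>j\<in>{0..t}.
           if i + j \<le> t then y i * (of_nat j * x j) * \<alpha> (t - i - j + 3) else 0)"
      by (subst (2) sum.swap) simp
    also have "\<dots> = ((Abs_fps x * (fps_X * fps_deriv (Abs_fps y))
            - Abs_fps y * (fps_X * fps_deriv (Abs_fps x))) * tp_series \<alpha>) $ t"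
      unfolding left_diff_distrib fps_sub_nth fps_mult3_nth
      by (intro arg_cong2[where f="(-)"] sum.cong refl)
         (auto simp: tp_series_def fps_mult_fps_X_deriv_shift)
    finally show ?thesis
      using True by (simp add: vec_of_fps_def)
  next
    case False
    then show ?thesis
      unfolding tp_bracket_def vec_of_fps_def by auto
  qed
qed

section \<open>Isomorphisms by substitution\<close>

definition substitution :: "nat \<Rightarrow> complex fps \<Rightarrow> (nat \<Rightarrow> complex) \<Rightarrow> nat \<Rightarrow> complex" where
  "substitution n \<phi> x = vec_of_fps n (Abs_fps x oo \<phi>)"

lemma substitution_in_vspace: "substitution n \<phi> x \<in> vspace n"
  by (simp add: substitution_def vec_of_fps_in_vspace)

lemma fps_eq_upto_substitution:
  "x \<in> vspace n \<Longrightarrow> fps_eq_upto n (Abs_fps (substitution n \<phi> x)) (Abs_fps x oo \<phi>)"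
  unfolding substitution_def by (rule fps_eq_upto_Abs_fps_vec_of_fps) (simp add: vspace_zero)

lemma substitution_substitution:
  assumes "x \<in> vspace n" and "\<phi> $ 0 = 0" and "\<psi> $ 0 = 0"
  shows "substitution n \<psi> (substitution n \<phi> x) = substitution n (\<phi> oo \<psi>) x"
proof -
  have "substitution n \<psi> (substitution n \<phi> x) = vec_of_fps n ((Abs_fps x oo \<phi>) oo \<psi>)"
    unfolding substitution_def
    by (intro vec_of_fps_cong fps_eq_upto_compose_left
        fps_eq_upto_substitution[unfolded substitution_def] assms)
  then show ?thesis
    by (simp add: substitution_def fps_compose_assoc assms)
qed

lemma substitution_fps_X: "x \<in> vspace n \<Longrightarrow> substitution n fps_X x = x"
  by (simp add: substitution_def vec_of_fps_Abs_fps)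

lemma bij_betw_substitution:
  assumes \<phi>: "\<phi> $ 0 = 0" "\<phi> $ 1 \<noteq> 0"
  shows "bij_betw (substitution n \<phi>) (vspace n) (vspace n)"
proof (rule bij_betw_byWitness[where f' = "substitution n (fps_inv \<phi>)"])
  have inv0: "fps_inv \<phi> $ 0 = 0"
    by (simp add: fps_inv_def)
  show "\<forall>x\<in>vspace n. substitution n (fps_inv \<phi>) (substitution n \<phi> x) = x"
    by (simp add: substitution_substitution \<phi> inv0 fps_inv_right[OF \<phi>] substitution_fps_X)
  show "\<forall>x\<in>vspace n. substitution n \<phi> (substitution n (fps_inv \<phi>) x) = x"
    by (simp add: substitution_substitution \<phi> inv0 fps_inv[OF \<phi>] substitution_fps_X)
qed (auto simp: substitution_in_vspace)

lemma substitution_add: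
  "substitution n \<phi> (\<lambda>t. x t + y t) = (\<lambda>t. substitution n \<phi> x t + substitution n \<phi> y t)"
proof -
  have "Abs_fps (\<lambda>t. x t + y t) = Abs_fps x + Abs_fps y"
    by (simp add: fps_eq_iff)
  then show ?thesis
    by (simp add: substitution_def vec_of_fps_def fps_compose_add_distrib fun_eq_iff)
qed

lemma substitution_scale:
  "substitution n \<phi> (\<lambda>t. c * x t) = (\<lambda>t. c * substitution n \<phi> x t)"
proof -
  have "Abs_fps (\<lambda>t. c * x t) = fps_const c * Abs_fps x"
    by (simp add: fps_eq_iff)
  then show ?thesis
    by (simp add: substitution_def vec_of_fps_def fps_const_mult_apply_left[symmetric] fun_eq_iff)
qed

lemma substitution_mu_prod:
  assumes x: "x \<in> vspace n" and y: "y \<in> vspace n" and \<phi>: "\<phi> $ 0 = 0"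
  shows "substitution n \<phi> (mu_prod n x y)
           = mu_prod n (substitution n \<phi> x) (substitution n \<phi> y)"
proof -
  have "substitution n \<phi> (mu_prod n x y) = vec_of_fps n ((Abs_fps x * Abs_fps y) oo \<phi>)"
    unfolding substitution_def mu_prod_eq_vec_of_fps[OF x y]
    by (intro vec_of_fps_cong fps_eq_upto_compose_left fps_eq_upto_Abs_fps_vec_of_fps)
       (simp add: vspace_zero[OF x])
  also have "\<dots> = vec_of_fps n ((Abs_fps x oo \<phi>) * (Abs_fps y oo \<phi>))"
    by (simp add: fps_compose_mult_distrib \<phi>)
  also have "\<dots> = vec_of_fps n (Abs_fps (substitution n \<phi> x) * Abs_fps (substitution n \<phi> y))"
    using fps_eq_upto_substitution[OF x] fps_eq_upto_substitution[OF y]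
    by (intro vec_of_fps_cong fps_eq_upto_mult) (simp_all add: fps_eq_upto_sym)
  also have "\<dots> = mu_prod n (substitution n \<phi> x) (substitution n \<phi> y)"
    by (simp add: mu_prod_eq_vec_of_fps substitution_in_vspace)
  finally show ?thesis .
qed

lemma substitution_tp_bracket:
  assumes x: "x \<in> vspace n" and y: "y \<in> vspace n"
    and \<alpha>: "\<alpha> 2 = 0" "\<alpha> 3 = 0" and \<beta>: "\<beta> 2 = 0" "\<beta> 3 = 0" and \<phi>: "\<phi> $ 0 = 0"
    and transport: "fps_eq_upto n (\<phi> * (tp_series \<alpha> oo \<phi>)) (fps_X * fps_deriv \<phi> * tp_series \<beta>)"
  shows "substitution n \<phi> (tp_bracket n \<alpha> x y)
           = tp_bracket n \<beta> (substitution n \<phi> x) (substitution n \<phi> y)"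
proof -
  define X Y where "X = Abs_fps x" and "Y = Abs_fps y"
  define W where "W = (X oo \<phi>) * (fps_deriv Y oo \<phi>) - (Y oo \<phi>) * (fps_deriv X oo \<phi>)"
  have "substitution n \<phi> (tp_bracket n \<alpha> x y)
      = vec_of_fps n (((X * (fps_X * fps_deriv Y) - Y * (fps_X * fps_deriv X)) * tp_series \<alpha>) oo \<phi>)"
    unfolding substitution_def tp_bracket_eq_vec_of_fps[OF x y \<alpha>] X_def Y_def
    by (intro vec_of_fps_cong fps_eq_upto_compose_left fps_eq_upto_Abs_fps_vec_of_fps)
       (simp add: vspace_zero[OF x] vspace_zero[OF y])
  also have "\<dots> = vec_of_fps n (W * (\<phi> * (tp_series \<alpha> oo \<phi>)))"
    by (simp add: W_def fps_compose_mult_distrib fps_compose_sub_distrib \<phi> algebra_simps)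
  also have "\<dots> = vec_of_fps n (W * (fps_X * fps_deriv \<phi> * tp_series \<beta>))"
    by (intro vec_of_fps_cong fps_eq_upto_mult fps_eq_upto_refl transport)
  also have "\<dots> = vec_of_fps n (((X oo \<phi>) * (fps_X * fps_deriv (Y oo \<phi>))
            - (Y oo \<phi>) * (fps_X * fps_deriv (X oo \<phi>))) * tp_series \<beta>)"
    by (simp add: W_def fps_compose_deriv[OF \<phi>] algebra_simps)
  also have "\<dots> = vec_of_fps n ((Abs_fps (substitution n \<phi> x)
              * (fps_X * fps_deriv (Abs_fps (substitution n \<phi> y)))
            - Abs_fps (substitution n \<phi> y)
              * (fps_X * fps_deriv (Abs_fps (substitution n \<phi> x)))) * tp_series \<beta>)"
    using fps_eq_upto_sym[OF fps_eq_upto_substitution[OF x]]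
      fps_eq_upto_sym[OF fps_eq_upto_substitution[OF y]]
    unfolding X_def Y_def
    by (intro vec_of_fps_cong fps_eq_upto_mult fps_eq_upto_diff fps_eq_upto_X_deriv fps_eq_upto_refl)
  also have "\<dots> = tp_bracket n \<beta> (substitution n \<phi> x) (substitution n \<phi> y)"
    by (simp add: tp_bracket_eq_vec_of_fps substitution_in_vspace \<beta>)
  finally show ?thesis .
qed

lemma tp_isomorphic_by_substitution:
  assumes \<alpha>: "\<alpha> 2 = 0" "\<alpha> 3 = 0" and \<beta>: "\<beta> 2 = 0" "\<beta> 3 = 0"
    and \<phi>: "\<phi> $ 0 = 0" "\<phi> $ 1 \<noteq> 0"
    and transport: "fps_eq_upto n (\<phi> * (tp_series \<alpha> oo \<phi>)) (fps_X * fps_deriv \<phi> * tp_series \<beta>)"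
  shows "tp_isomorphic n \<alpha> \<beta>"
  unfolding tp_isomorphic_def
  by (intro exI[of _ "substitution n \<phi>"] conjI ballI allI bij_betw_substitution \<phi>
      substitution_add substitution_scale substitution_mu_prod substitution_tp_bracket \<alpha> \<beta> transport)

lemma tp_isomorphic_if_fps_eq_upto:
  assumes "\<alpha> 2 = 0" "\<alpha> 3 = 0" "\<beta> 2 = 0" "\<beta> 3 = 0"
    and "fps_eq_upto n (tp_series \<alpha>) (tp_series \<beta>)"
  shows "tp_isomorphic n \<alpha> \<beta>"
  by (rule tp_isomorphic_by_substitution[where \<phi> = fps_X]) (simp_all add: assms fps_eq_upto_mult)

lemma tp_isomorphic_scale:
  fixes c :: complex
  assumes \<alpha>: "\<alpha> 2 = 0" "\<alpha> 3 = 0" and c: "c \<noteq> 0"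
  shows "tp_isomorphic n \<alpha> (\<lambda>k. if k \<le> 3 then 0 else c ^ (k - 3) * \<alpha> k)"
proof -
  let ?\<beta> = "\<lambda>k. if k \<le> 3 then 0 else c ^ (k - 3) * \<alpha> k"
  have "tp_series ?\<beta> = tp_series \<alpha> oo (fps_const c * fps_X)"
    unfolding fps_compose_linear tp_series_def by (rule fps_ext) (simp add: \<alpha>)
  then show ?thesis
    by (intro tp_isomorphic_by_substitution[where \<phi> = "fps_const c * fps_X"])
      (simp_all add: \<alpha> c mult_ac)
qed

lemma tp_isomorphic_trans:
  assumes "tp_isomorphic n \<alpha> \<beta>" and "tp_isomorphic n \<beta> \<gamma>"
  shows "tp_isomorphic n \<alpha> \<gamma>"
proof -
  obtain f g where f: "bij_betw f (vspace n) (vspace n)"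
    "\<forall>x\<in>vspace n. \<forall>y\<in>vspace n. f (\<lambda>t. x t + y t) = (\<lambda>t. f x t + f y t)"
    "\<forall>c. \<forall>x\<in>vspace n. f (\<lambda>t. c * x t) = (\<lambda>t. c * f x t)"
    "\<forall>x\<in>vspace n. \<forall>y\<in>vspace n. f (mu_prod n x y) = mu_prod n (f x) (f y)"
    "\<forall>x\<in>vspace n. \<forall>y\<in>vspace n. f (tp_bracket n \<alpha> x y) = tp_bracket n \<beta> (f x) (f y)"
  and g: "bij_betw g (vspace n) (vspace n)"
    "\<forall>x\<in>vspace n. \<forall>y\<in>vspace n. g (\<lambda>t. x t + y t) = (\<lambda>t. g x t + g y t)"
    "\<forall>c. \<forall>x\<in>vspace n. g (\<lambda>t. c * x t) = (\<lambda>t. c * g x t)"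
    "\<forall>x\<in>vspace n. \<forall>y\<in>vspace n. g (mu_prod n x y) = mu_prod n (g x) (g y)"
    "\<forall>x\<in>vspace n. \<forall>y\<in>vspace n. g (tp_bracket n \<beta> x y) = tp_bracket n \<gamma> (g x) (g y)"
    using assms unfolding tp_isomorphic_def by blast
  have "f x \<in> vspace n" if "x \<in> vspace n" for x
    using bij_betw_apply[OF f(1) that] .
  then show ?thesis
    unfolding tp_isomorphic_def using f g
    by (intro exI[of _ "g \<circ> f"]) (auto intro: bij_betw_trans)
qed

section \<open>Normal form\<close>

lemma fps_compose_X_plus_monom:
  fixes G :: "'a::idom fps"
  assumes G0: "G $ 0 = 0" and N: "2 \<le> N"
  shows "fps_eq_upto N (G oo (fps_X + fps_const c * fps_X ^ N))
           (G + fps_const (c * G $ 1) * fps_X ^ N)"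
proof -
  define R where "R = Abs_fps (\<lambda>k. G $ (k + 2))"
  define u where "u = 1 + fps_const c * fps_X ^ (N - 1)"
  define \<phi> where "\<phi> = fps_X + fps_const c * fps_X ^ N"
  have X_u: "\<phi> = fps_X * u"
    using N by (simp add: \<phi>_def u_def distrib_left power_Suc[symmetric] mult.left_commute)
  have \<phi>0: "\<phi> $ 0 = 0"
    using N by (simp add: \<phi>_def)
  have G_split: "G = fps_const (G $ 1) * fps_X + fps_X ^ 2 * R"
  proof (rule fps_ext)
    fix k
    show "G $ k = (fps_const (G $ 1) * fps_X + fps_X ^ 2 * R) $ k"
      using G0 by (cases k) (auto simp: R_def fps_X_power_mult_nth fps_X_nth)
  qed
  have "G oo \<phi> = fps_const (G $ 1) * \<phi> + \<phi> ^ 2 * (R oo \<phi>)"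
    by (subst G_split) (simp add: fps_compose_add_distrib fps_compose_mult_distrib \<phi>0
        fps_compose_power[OF \<phi>0, symmetric])
  also have "\<dots> = fps_const (G $ 1) * fps_X + fps_const (c * G $ 1) * fps_X ^ N
      + fps_X ^ 2 * (u ^ 2 * (R oo \<phi>))"
  proof -
    have "fps_const (G $ 1) * \<phi> = fps_const (G $ 1) * fps_X + fps_const (c * G $ 1) * fps_X ^ N"
      by (simp add: \<phi>_def algebra_simps flip: fps_const_mult)
    moreover have "\<phi> ^ 2 = fps_X ^ 2 * u ^ 2"
      by (simp add: X_u power_mult_distrib)
    ultimately show ?thesis
      by (simp add: mult.assoc)
  qed
  finally have G_\<phi>: "G oo \<phi> = \<dots>" .
  have "fps_eq_upto (N - 2) u 1" and "fps_eq_upto (N - 2) \<phi> fps_X"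
    using N by (auto simp: fps_eq_upto_def u_def \<phi>_def)
  then have "fps_eq_upto (N - 2) (u ^ 2 * (R oo \<phi>)) (1 ^ 2 * (R oo fps_X))"
    by (intro fps_eq_upto_mult fps_eq_upto_power fps_eq_upto_compose_right)
  then have "fps_eq_upto (N - 2) (u ^ 2 * (R oo \<phi>)) R"
    by simp
  then have "fps_eq_upto (N - 2 + 2) (fps_X ^ 2 * (u ^ 2 * (R oo \<phi>))) (fps_X ^ 2 * R)"
    by (rule fps_eq_upto_X_power_mult)
  then have "fps_eq_upto N (G oo \<phi>)
      (fps_const (G $ 1) * fps_X + fps_const (c * G $ 1) * fps_X ^ N + fps_X ^ 2 * R)"
    unfolding G_\<phi> le_add_diff_inverse2[OF N] by (intro fps_eq_upto_add fps_eq_upto_refl)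
  then show ?thesis
    by (subst (2) G_split) (simp add: \<phi>_def add_ac)
qed

(* For \<phi> = z + \<delta> z\<^sup>N the left-hand side is (\<phi> / z) (G \<circ> \<phi>) / \<phi>', the series that the
   substitution \<phi> forces as the new G\<^sub>\<beta>. *)
lemma fps_eq_upto_X_plus_monom_transport:
  fixes G :: "complex fps"
  assumes G0: "G $ 0 = 0" and G1: "G $ 1 = 1" and N: "3 \<le> N"
  shows "fps_eq_upto N
           ((1 + fps_const \<delta> * fps_X ^ (N - 1)) * (G oo (fps_X + fps_const \<delta> * fps_X ^ N))
             * inverse (1 + fps_const (of_nat N * \<delta>) * fps_X ^ (N - 1)))
           (G + fps_const ((2 - of_nat N) * \<delta>) * fps_X ^ N)"
proof -
  define P where "P = fps_const \<delta> * fps_X ^ (N - 1)"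
  define cN where "cN = fps_const (of_nat N :: complex)"
  define A where "A = G + fps_const \<delta> * fps_X ^ N"
  have "fps_eq_upto N (G oo (fps_X + fps_const \<delta> * fps_X ^ N)) A"
    using fps_compose_X_plus_monom[OF G0, of N \<delta>] N unfolding G1 by (simp add: A_def)
  moreover have "fps_eq_upto N (inverse (1 + cN * P)) (1 - cN * P)"
  proof (rule fps_eq_upto_inverse_one_plus)
    show "fps_eq_upto N (cN * P * (cN * P)) 0"
      using N by (auto simp: fps_eq_upto_def P_def cN_def mult_ac power_add[symmetric]
          fps_X_power_mult_right_nth)
  qed
  ultimately have "fps_eq_upto N ((1 + P) * (G oo (fps_X + fps_const \<delta> * fps_X ^ N))
      * inverse (1 + cN * P)) ((1 + P) * A * (1 - cN * P))"
    by (intro fps_eq_upto_mult fps_eq_upto_refl)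
  also have "(1 + P) * A * (1 - cN * P)
      = A + fps_const (1 - of_nat N) * (P * A) - cN * (P * (P * A))"
    by (simp add: cN_def algebra_simps flip: fps_const_sub)
  also have "fps_eq_upto N \<dots> (A + fps_const (1 - of_nat N) * (fps_const \<delta> * fps_X ^ N) - cN * 0)"
  proof -
    have P_A: "fps_eq_upto N (P * A) (fps_const \<delta> * fps_X ^ N)"
      unfolding fps_eq_upto_def
    proof (intro allI impI)
      fix k
      assume "k \<le> N"
      then consider "k < N - 1" | "k = N - 1" | "k = N"
        by linarith
      then show "(P * A) $ k = (fps_const \<delta> * fps_X ^ N) $ k"
        using N G0 G1 by cases (auto simp: P_def A_def fps_X_power_mult_nth mult.assoc)
    qed
    have P_P_A: "fps_eq_upto N (P * (P * A)) 0"
      using N by (auto simp: fps_eq_upto_def P_def mult.assoc fps_X_power_mult_nth)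
    show ?thesis
      by (intro fps_eq_upto_diff fps_eq_upto_add fps_eq_upto_refl
          fps_eq_upto_mult[OF fps_eq_upto_refl P_A] fps_eq_upto_mult[OF fps_eq_upto_refl P_P_A])
  qed
  also have "\<dots> = G + fps_const ((2 - of_nat N) * \<delta>) * fps_X ^ N"
    by (rule fps_ext) (simp add: A_def algebra_simps)
  finally show ?thesis
    by (simp add: P_def cN_def mult.assoc[symmetric])
qed

lemma fps_kill_coeff_by_substitution:
  fixes G :: "complex fps"
  assumes G0: "G $ 0 = 0" and G1: "G $ 1 = 1" and N: "3 \<le> N"
  obtains \<phi> H where "\<phi> $ 0 = 0" "\<phi> $ 1 = 1" "\<phi> * (G oo \<phi>) = fps_X * fps_deriv \<phi> * H"
    "\<And>k. k < N \<Longrightarrow> H $ k = G $ k" "H $ N = 0"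
proof -
  define \<delta> where "\<delta> = G $ N / (of_nat N - 2)"
  define u where "u = 1 + fps_const \<delta> * fps_X ^ (N - 1)"
  define \<phi> where "\<phi> = fps_X + fps_const \<delta> * fps_X ^ N"
  define H where "H = u * (G oo \<phi>) * inverse (fps_deriv \<phi>)"
  have \<phi>_u: "\<phi> = fps_X * u"
    using N by (simp add: \<phi>_def u_def distrib_left mult.left_commute power_Suc[symmetric])
  have \<phi>_deriv: "fps_deriv \<phi> = 1 + fps_const (of_nat N * \<delta>) * fps_X ^ (N - 1)"
    by (simp add: \<phi>_def fps_deriv_power mult_ac flip: fps_of_nat)
  have "fps_deriv \<phi> $ 0 \<noteq> 0"
    using N by (simp add: \<phi>_deriv)
  then have "\<phi> * (G oo \<phi>) = fps_X * fps_deriv \<phi> * H"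
    by (simp add: H_def \<phi>_u inverse_mult_eq_1' mult_ac)
  moreover have "fps_eq_upto N H (G + fps_const ((2 - of_nat N) * \<delta>) * fps_X ^ N)"
    unfolding H_def u_def \<phi>_deriv unfolding \<phi>_def by (rule fps_eq_upto_X_plus_monom_transport[OF G0 G1 N])
  moreover have "(of_nat N :: complex) \<noteq> of_nat 2"
    using N unfolding of_nat_eq_iff by simp
  ultimately show ?thesis
    using that[of \<phi> H] N by (auto simp: fps_eq_upto_def \<phi>_def \<delta>_def field_simps)
qed

lemma tp_isomorphic_kill_coeff:
  assumes \<alpha>: "\<alpha> 2 = 0" "\<alpha> 3 = 0" and one: "tp_series \<alpha> $ 1 = 1" and N: "3 \<le> N"
  obtains \<beta> where "\<beta> 2 = 0" "\<beta> 3 = 0" "\<And>k. k < N \<Longrightarrow> tp_series \<beta> $ k = tp_series \<alpha> $ k"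
    "tp_series \<beta> $ N = 0" "tp_isomorphic n \<alpha> \<beta>"
proof -
  have zero: "tp_series \<alpha> $ 0 = 0"
    by (simp add: tp_series_def \<alpha>)
  obtain \<phi> H where \<phi>: "\<phi> $ 0 = 0" "\<phi> $ 1 = 1"
    and transport: "\<phi> * (tp_series \<alpha> oo \<phi>) = fps_X * fps_deriv \<phi> * H"
    and H: "\<And>k. k < N \<Longrightarrow> H $ k = tp_series \<alpha> $ k" "H $ N = 0"
    using fps_kill_coeff_by_substitution[OF zero one N] by blast
  define \<beta> where "\<beta> k = (if k \<le> 3 then 0 else H $ (k - 3))" for k
  have "H $ 0 = 0"
    using H(1)[of 0] N zero by simp
  then have series: "tp_series \<beta> = H"
    by (intro fps_ext) (simp add: tp_series_def \<beta>_def)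
  have iso: "tp_isomorphic n \<alpha> \<beta>"
    by (rule tp_isomorphic_by_substitution[OF \<alpha> _ _ \<phi>(1)])
      (use \<phi>(2) in \<open>simp_all add: \<beta>_def series transport\<close>)
  show ?thesis
    by (rule that[OF _ _ _ _ iso]) (simp_all add: \<beta>_def series H)
qed

lemma tp_isomorphic_kill_coeffs:
  assumes \<alpha>: "\<alpha> 2 = 0" "\<alpha> 3 = 0" and one: "tp_series \<alpha> $ 1 = 1"
  shows "\<exists>\<beta>. \<beta> 2 = 0 \<and> \<beta> 3 = 0 \<and> (\<forall>k<3. tp_series \<beta> $ k = tp_series \<alpha> $ k)
           \<and> (\<forall>k. 3 \<le> k \<and> k < M \<longrightarrow> tp_series \<beta> $ k = 0) \<and> tp_isomorphic n \<alpha> \<beta>"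
proof (induction M)
  case 0
  show ?case
    using \<alpha> by (intro exI[of _ \<alpha>]) (simp add: tp_isomorphic_if_fps_eq_upto)
next
  case (Suc M)
  then obtain \<beta> where \<beta>: "\<beta> 2 = 0" "\<beta> 3 = 0" "\<forall>k<3. tp_series \<beta> $ k = tp_series \<alpha> $ k"
      "\<forall>k. 3 \<le> k \<and> k < M \<longrightarrow> tp_series \<beta> $ k = 0" "tp_isomorphic n \<alpha> \<beta>"
    by blast
  show ?case
  proof (cases "M < 3")
    case True
    then show ?thesis
      using \<beta> by (intro exI[of _ \<beta>]) auto
  next
    case False
    have "tp_series \<beta> $ 1 = 1"
      using \<beta>(3) one by simp
    then obtain \<gamma> where "\<gamma> 2 = 0" "\<gamma> 3 = 0" "\<And>k. k < M \<Longrightarrow> tp_series \<gamma> $ k = tp_series \<beta> $ k"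
        "tp_series \<gamma> $ M = 0" "tp_isomorphic n \<beta> \<gamma>"
      using tp_isomorphic_kill_coeff[OF \<beta>(1,2)] False by (metis not_less)
    then show ?thesis
      using \<beta> False tp_isomorphic_trans[OF \<beta>(5)]
      by (intro exI[of _ \<gamma>]) (auto simp: less_Suc_eq)
  qed
qed

lemma tp_isomorphic_normal_form:
  assumes \<alpha>: "\<alpha> 2 = 0" "\<alpha> 3 = 0" and one: "\<alpha> 4 = 1"
  shows "tp_isomorphic n \<alpha> (\<lambda>i. if i = 4 then 1 else if i = 5 then \<alpha> 5 else 0)"
proof -
  define \<gamma> :: "nat \<Rightarrow> complex" where "\<gamma> = (\<lambda>i. if i = 4 then 1 else if i = 5 then \<alpha> 5 else 0)"
  have "tp_series \<alpha> $ 1 = 1"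
    by (simp add: tp_series_def one)
  then obtain \<beta> where \<beta>: "\<beta> 2 = 0" "\<beta> 3 = 0" "\<forall>k<3. tp_series \<beta> $ k = tp_series \<alpha> $ k"
      "\<forall>k. 3 \<le> k \<and> k < n + 1 \<longrightarrow> tp_series \<beta> $ k = 0" "tp_isomorphic n \<alpha> \<beta>"
    using tp_isomorphic_kill_coeffs[OF \<alpha>, of "n + 1" n] by blast
  have "fps_eq_upto n (tp_series \<beta>) (tp_series \<gamma>)"
    unfolding fps_eq_upto_def
  proof (intro allI impI)
    fix k
    assume "k \<le> n"
    then consider "k = 0" | "k = 1" | "k = 2" | "3 \<le> k \<and> k < n + 1"
      by linarith
    then show "tp_series \<beta> $ k = tp_series \<gamma> $ k"
      using \<beta>(3)[rule_format, of 0] \<beta>(3)[rule_format, of 1] \<beta>(3)[rule_format, of 2] \<beta>(4)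
      by cases (simp_all add: \<gamma>_def tp_series_def \<alpha> one)
  qed
  then have "tp_isomorphic n \<beta> \<gamma>"
    using \<beta>(1,2) by (intro tp_isomorphic_if_fps_eq_upto) (simp_all add: \<gamma>_def)
  then show ?thesis
    using \<beta>(5) unfolding \<gamma>_def by (rule tp_isomorphic_trans[rotated])
qed

theorem mainTheorem9:
  fixes n :: nat and \<alpha> :: "nat \<Rightarrow> complex"
  assumes "n \<ge> 4" and "\<alpha> 2 = 0" and "\<alpha> 3 = 0" and "\<alpha> 4 \<noteq> 0"
  shows "\<exists>a::complex. tp_isomorphic n \<alpha>
           (\<lambda>i. if i = 4 then 1 else if i = 5 then a else 0)"
proof -
  define \<alpha>' where "\<alpha>' k = (if k \<le> 3 then 0 else (1 / \<alpha> 4) ^ (k - 3) * \<alpha> k)" for k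
  have "tp_isomorphic n \<alpha> \<alpha>'"
    unfolding \<alpha>'_def by (rule tp_isomorphic_scale) (use assms in auto)
  moreover have "tp_isomorphic n \<alpha>' (\<lambda>i. if i = 4 then 1 else if i = 5 then \<alpha>' 5 else 0)"
    by (rule tp_isomorphic_normal_form) (use assms(4) in \<open>simp_all add: \<alpha>'_def\<close>)
  ultimately show ?thesis
    by (blast intro: tp_isomorphic_trans)
qed

end
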